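(* Let $n\geqslant 1$. Every $\lambda\subset\mathbb N^{3n}$ which is a partition with embedding dimension $h_\lambda(1)=3n$ and socle type $(0,0,0,n)$ has Hilbert–Samuel function $(1,3n,3n,n)$; in particular it is an M-partition of type $(3n,3n,n)$ and length $3$. Moreover \[ \alpha^{3n}_{3n,n,3}=\frac{(3n)!}{6^n\,n!}. \]
   Context: Let $\mathbb N=\mathbb Z_{\geqslant 0}$ with the componentwise order. A partition in $\mathbb N^k$ is a finite subset $\lambda\subset\mathbb N^k$ closed downward; $\mathrm P^k_d$ is the set of those of size $d$. The degree of a point is the sum of its coordinates; $\lambda_{=i}$, $\lambda_{\geqslant i}$ are the elements of degree $i$, resp. $\geqslant i$; the Hilbert–Samuel function is $h_\lambda(i)=|\lambda_{=i}|$, written as the tuple $(h_\lambda(0),h_\lambda(1),\dots,h_\lambda(\ell))$ with $\ell=\ell(\lambda)$ the maximal degree (the length); $h_\lambda(1)$ is the embedding dimension. $\mathrm{Soc}(\lambda)$ is the set of maximal elements; the socle type $(0,0,0,n)$ means all elements of $\mathrm{Soc}(\lambda)$ have degree $3$ and there are exactly $n$ of them. For positive integers $k,q,m$, an M-partition of type $(k,q,m)$ is $\lambda\in\mathrm P^k_{1+k+q+m}$ with $\mathrm{Soc}(\lambda)\subset\lambda_{\geqslant3}$, $h_\lambda(1)=k$, $h_\lambda(2)=q$, $\sum_{i\geqslant3}h_\lambda(i)=m$; $\alpha^k_{q,m,\ell}$ is the number of M-partitions of type $(k,q,m)$ and length $\ell$. *)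

theory Defs
  imports Complex_Main
begin

text \<open>Points of N^k are modelled as functions nat => nat vanishing at all indices >= k;
the componentwise order is the pointwise order on functions.\<close>

definition pts :: "nat \<Rightarrow> (nat \<Rightarrow> nat) set" where
  "pts k = {x. \<forall>i\<ge>k. x i = 0}"

definition is_partition :: "nat \<Rightarrow> (nat \<Rightarrow> nat) set \<Rightarrow> bool" where
  "is_partition k lam \<longleftrightarrow> finite lam \<and> lam \<subseteq> pts k \<and>
     (\<forall>x\<in>lam. \<forall>y\<in>pts k. y \<le> x \<longrightarrow> y \<in> lam)"

definition deg :: "nat \<Rightarrow> (nat \<Rightarrow> nat) \<Rightarrow> nat" where
  "deg k x = (\<Sum>i<k. x i)"

definition hilb :: "nat \<Rightarrow> (nat \<Rightarrow> nat) set \<Rightarrow> nat \<Rightarrow> nat" where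
  "hilb k lam i = card {x\<in>lam. deg k x = i}"

definition plength :: "nat \<Rightarrow> (nat \<Rightarrow> nat) set \<Rightarrow> nat" where
  "plength k lam = Max (deg k ` lam)"

definition hilb_tuple :: "nat \<Rightarrow> (nat \<Rightarrow> nat) set \<Rightarrow> nat list" where
  "hilb_tuple k lam = map (hilb k lam) [0..<Suc (plength k lam)]"

definition socle :: "(nat \<Rightarrow> nat) set \<Rightarrow> (nat \<Rightarrow> nat) set" where
  "socle lam = {x\<in>lam. \<forall>y\<in>lam. x \<le> y \<longrightarrow> y = x}"

text \<open>Socle type (0,0,0,n): all socle elements have degree 3 and there are exactly n of them.\<close>
definition socle_type_3 :: "nat \<Rightarrow> (nat \<Rightarrow> nat) set \<Rightarrow> nat \<Rightarrow> bool" where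
  "socle_type_3 k lam n \<longleftrightarrow> (\<forall>x\<in>socle lam. deg k x = 3) \<and> card (socle lam) = n"

definition M_partition :: "nat \<Rightarrow> nat \<Rightarrow> nat \<Rightarrow> (nat \<Rightarrow> nat) set \<Rightarrow> bool" where
  "M_partition k q m lam \<longleftrightarrow> is_partition k lam \<and> card lam = 1 + k + q + m \<and>
     (\<forall>x\<in>socle lam. deg k x \<ge> 3) \<and> hilb k lam 1 = k \<and> hilb k lam 2 = q \<and>
     card {x\<in>lam. deg k x \<ge> 3} = m"

definition alpha :: "nat \<Rightarrow> nat \<Rightarrow> nat \<Rightarrow> nat \<Rightarrow> nat" where
  "alpha k q m l = card {lam. M_partition k q m lam \<and> plength k lam = l}"

end

theory Submission
  imports Defs "HOL-Library.Disjoint_Sets" "HOL-Library.Indicator_Function"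
begin

text \<open>
  Since h(1) = 3n, all 3n unit vectors lie in the partition, and each lies below one of the n
  socle elements. A socle element has degree 3, so its support has at most three coordinates;
  as these supports cover all 3n coordinates, they are pairwise disjoint triples and the socle
  elements are their 0/1 indicator vectors. Hence the partition consists of the indicator
  vectors of the subsets of the blocks of a partition of the coordinates into triples, whose
  Hilbert--Samuel function is (1, 3n, 3n, n). Conversely, every partition of the coordinates into
  triples arises, and is recovered from the socle. So the number of M-partitions in question is
  the number of partitions of a 3n-set into triples, (3n)!/(6^n n!).
\<close>

definition triple_partitions :: "'a set \<Rightarrow> 'a set set set" where
  "triple_partitions A = {P. partition_on A P \<and> (\<forall>t\<in>P. card t = 3)}"

lemma finite_triple_partitions: "finite A \<Longrightarrow> finite (triple_partitions A)"
  by (rule finite_subset[OF _ finitely_many_partition_on]) (auto simp: triple_partitions_def)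

lemma card_triple_partition:
  assumes P: "P \<in> triple_partitions A"
  shows "card A = 3 * card P"
proof -
  have part: "partition_on A P" and blocks: "\<And>t. t \<in> P \<Longrightarrow> card t = 3"
    using P by (auto simp: triple_partitions_def)
  have "\<And>t. t \<in> P \<Longrightarrow> finite t"
    using blocks card.infinite by fastforce
  then have "card A = (\<Sum>t\<in>P. card t)"
    using part product_partition by blast
  then show ?thesis
    using blocks by simp
qed

lemma disjoint_family_on_if_card_UN_eq_sum:
  assumes fin: "finite I" "\<And>i. i \<in> I \<Longrightarrow> finite (A i)"
    and eq: "card (\<Union>i\<in>I. A i) = (\<Sum>i\<in>I. card (A i))"
  shows "disjoint_family_on A I"
  unfolding disjoint_family_on_def
proof (intro ballI impI, rule ccontr)
  fix i j assume ij: "i \<in> I" "j \<in> I" "i \<noteq> j" and "A i \<inter> A j \<noteq> {}"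
  then have "card (A i \<inter> A j) > 0"
    using fin by auto
  then have overlap: "card (A i \<union> A j) < card (A i) + card (A j)"
    using card_Un_Int[of "A i" "A j"] fin ij by simp
  have "(\<Union>i\<in>I. A i) = (A i \<union> A j) \<union> (\<Union>l\<in>I - {i, j}. A l)"
    using ij by blast
  then have "card (\<Union>i\<in>I. A i) \<le> card (A i \<union> A j) + card (\<Union>l\<in>I - {i, j}. A l)"
    by (simp only: card_Un_le)
  also have "\<dots> \<le> card (A i \<union> A j) + (\<Sum>l\<in>I - {i, j}. card (A l))"
    using card_UN_le[of "I - {i, j}" A] fin(1) by simp
  also have "\<dots> < card (A i) + card (A j) + (\<Sum>l\<in>I - {i, j}. card (A l))"
    using overlap by simp
  also have "\<dots> = card (A i) + (card (A j) + (\<Sum>l\<in>I - {i} - {j}. card (A l)))"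
    by (simp add: Diff_insert2 [symmetric])
  also have "\<dots> = (\<Sum>l\<in>I. card (A l))"
    using ij fin(1) sum.remove[of "I - {i}" j "\<lambda>l. card (A l)"] by (simp add: sum.remove)
  finally show False
    using eq by simp
qed

lemma triple_partitions_insert_block:
  assumes "a \<in> A"
  shows "triple_partitions A =
    (\<lambda>(t, Q). insert t Q) ` (SIGMA t:{t. t \<subseteq> A \<and> a \<in> t \<and> card t = 3}. triple_partitions (A - t))"
    (is "_ = ?f ` ?S")
proof
  show "triple_partitions A \<subseteq> ?f ` ?S"
  proof
    fix P assume P: "P \<in> triple_partitions A"
    then have part: "partition_on A P" and blocks: "\<forall>t\<in>P. card t = 3"
      by (auto simp: triple_partitions_def)
    obtain t where t: "t \<in> P" "a \<in> t"
      using assms partition_onD1[OF part] by blast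
    have "disjnt t (\<Union>(P - {t}))"
      using partition_onD2[OF part] t(1) by (auto simp: disjnt_def pairwise_def)
    then have "partition_on (A - t) (P - {t}) \<and> t \<subseteq> A"
      using partition_on_insert[of t "P - {t}" A] part t(1) by (simp add: insert_absorb)
    then have "(t, P - {t}) \<in> ?S"
      using blocks t by (simp add: triple_partitions_def)
    moreover have "P = ?f (t, P - {t})"
      using t(1) by auto
    ultimately show "P \<in> ?f ` ?S"
      by blast
  qed
next
  show "?f ` ?S \<subseteq> triple_partitions A"
  proof clarify
    fix t Q assume t: "t \<subseteq> A" "a \<in> t" "card t = 3" and Q: "Q \<in> triple_partitions (A - t)"
    then have "disjnt t (\<Union>Q)"
      by (auto simp: triple_partitions_def disjnt_def dest!: partition_onD1)
    moreover have "t \<noteq> {}"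
      using t(2) by blast
    ultimately show "insert t Q \<in> triple_partitions A"
      using t Q partition_on_insert[of t Q A] by (auto simp: triple_partitions_def)
  qed
qed

lemma inj_on_insert_block:
  "inj_on (\<lambda>(t, Q). insert t Q) (SIGMA t:{t. a \<in> t}. triple_partitions (A - t))"
proof (rule inj_onI, clarify)
  fix t Q t' Q'
  assume a: "a \<in> t" "a \<in> t'"
    and Q: "Q \<in> triple_partitions (A - t)" "Q' \<in> triple_partitions (A - t')"
    and eq: "insert t Q = insert t' Q'"
  have "\<Union>Q = A - t" "\<Union>Q' = A - t'"
    using Q by (simp_all add: triple_partitions_def partition_on_def)
  then have "t \<notin> Q" "t' \<notin> Q'" "t = t'"
    using a eq by blast+
  then show "t = t' \<and> Q = Q'"
    using eq by (metis insert_ident)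
qed

lemma card_triples_containing:
  assumes "finite A" "a \<in> A"
  shows "card {t. t \<subseteq> A \<and> a \<in> t \<and> card t = 3} = (card A - 1) choose 2"
proof -
  have "{t. t \<subseteq> A \<and> a \<in> t \<and> card t = 3} = insert a ` {s. s \<subseteq> A - {a} \<and> card s = 2}"
  proof (intro equalityI subsetI)
    fix t assume t: "t \<in> {t. t \<subseteq> A \<and> a \<in> t \<and> card t = 3}"
    then have "t = insert a (t - {a})" "card (t - {a}) = 2"
      using finite_subset[OF _ assms(1)] by auto
    then show "t \<in> insert a ` {s. s \<subseteq> A - {a} \<and> card s = 2}"
      using t by blast
  next
    fix t assume "t \<in> insert a ` {s. s \<subseteq> A - {a} \<and> card s = 2}"
    then obtain s where s: "s \<subseteq> A - {a}" "card s = 2" "t = insert a s"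
      by blast
    then have "finite s" "a \<notin> s"
      using assms(1) finite_subset[of s A] by auto
    then show "t \<in> {t. t \<subseteq> A \<and> a \<in> t \<and> card t = 3}"
      using assms(2) s by auto
  qed
  moreover have "inj_on (insert a) {s. s \<subseteq> A - {a} \<and> card s = 2}"
    by (rule inj_onI) (metis Diff_insert_absorb mem_Collect_eq subset_Diff_insert)
  ultimately show ?thesis
    using assms n_subsets[of "A - {a}" 2] by (simp add: card_image)
qed

lemma card_triple_partitions_remove_block:
  assumes "finite A" "a \<in> A"
  shows "card (triple_partitions A) =
    (\<Sum>t\<in>{t. t \<subseteq> A \<and> a \<in> t \<and> card t = 3}. card (triple_partitions (A - t)))"
proof -
  let ?T = "{t. t \<subseteq> A \<and> a \<in> t \<and> card t = 3}"
  have "card (triple_partitions A) = card (SIGMA t:?T. triple_partitions (A - t))"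
    unfolding triple_partitions_insert_block[OF assms(2)]
    by (rule card_image, rule inj_on_subset[OF inj_on_insert_block[of a A]]) auto
  also have "\<dots> = (\<Sum>t\<in>?T. card (triple_partitions (A - t)))"
    using assms(1) by (simp add: card_SigmaI finite_triple_partitions)
  finally show ?thesis .
qed

lemma fact_three_times_Suc:
  "fact (3 * Suc m) = 6 * Suc m * ((3 * m + 2) choose 2) * (fact (3 * m) :: nat)"
proof -
  have "fact (3 * Suc m) = (3 * m + 3) * (3 * m + 2) * (3 * m + 1) * (fact (3 * m) :: nat)"
    by (simp add: fact_Suc algebra_simps numeral_3_eq_3)
  also have "\<dots> = 3 * Suc m * (2 * ((3 * m + 2) choose 2)) * fact (3 * m)"
    by (simp add: choose_two algebra_simps)
  finally show ?thesis
    by simp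
qed

lemma card_triple_partitions:
  assumes "finite A" "card A = 3 * m"
  shows "card (triple_partitions A) * 6 ^ m * fact m = fact (3 * m)"
  using assms
proof (induction m arbitrary: A)
  case 0
  then have "triple_partitions A = {{}}"
    by (auto simp: triple_partitions_def partition_on_empty)
  then show ?case
    by simp
next
  case (Suc m)
  then obtain a where a: "a \<in> A"
    by fastforce
  let ?T = "{t. t \<subseteq> A \<and> a \<in> t \<and> card t = 3}"
  have "card (triple_partitions (A - t)) * 6 ^ m * fact m = fact (3 * m)" if "t \<in> ?T" for t
  proof -
    have "t \<subseteq> A" "card t = 3"
      using that by simp_all
    then have "card (A - t) = 3 * m"
      using Suc.prems by (simp add: card_Diff_subset finite_subset)
    then show ?thesis
      using Suc.IH Suc.prems(1) by simp
  qed
  then have "card (triple_partitions A) * 6 ^ m * fact m = card ?T * fact (3 * m)"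
    using card_triple_partitions_remove_block[OF Suc.prems(1) a] by (simp add: sum_distrib_right)
  also have "\<dots> = ((3 * m + 2) choose 2) * fact (3 * m)"
    using card_triples_containing[OF Suc.prems(1) a] Suc.prems(2) by simp
  finally have IH: "card (triple_partitions A) * 6 ^ m * fact m = ((3 * m + 2) choose 2) * fact (3 * m)" .
  have "card (triple_partitions A) * 6 ^ Suc m * fact (Suc m)
      = 6 * Suc m * (card (triple_partitions A) * 6 ^ m * fact m)"
    by (simp add: algebra_simps)
  then show ?case
    unfolding IH fact_three_times_Suc by (simp add: mult.assoc)
qed

definition supp :: "('a \<Rightarrow> 'b::zero) \<Rightarrow> 'a set" where
  "supp x = {i. x i \<noteq> 0}"

lemma supp_indicator [simp]: "supp (indicator S :: 'a \<Rightarrow> 'b::zero_neq_one) = S"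
  by (simp add: supp_def indicator_eq_0_iff)

lemma inj_indicator: "inj (indicator :: 'a set \<Rightarrow> 'a \<Rightarrow> 'b::zero_neq_one)"
  by (metis injI supp_indicator)

lemma indicator_le_indicator_iff: "indicator S \<le> (indicator T :: 'a \<Rightarrow> nat) \<longleftrightarrow> S \<subseteq> T"
  by (auto simp: le_fun_def indicator_def split: if_splits)

lemma le_indicator_iff:
  "y \<le> (indicator S :: 'a \<Rightarrow> nat) \<longleftrightarrow> y = indicator (supp y) \<and> supp y \<subseteq> S"
proof
  assume le: "y \<le> indicator S"
  have "y i = indicator (supp y) i \<and> (y i \<noteq> 0 \<longrightarrow> i \<in> S)" for i
  proof -
    have "y i \<le> indicator S i"
      using le by (simp add: le_fun_def)
    then show ?thesis
      by (cases "i \<in> S") (simp_all add: supp_def indicator_def)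
  qed
  then show "y = indicator (supp y) \<and> supp y \<subseteq> S"
    unfolding supp_def by blast
next
  assume "y = indicator (supp y) \<and> supp y \<subseteq> S"
  then show "y \<le> indicator S"
    by (metis indicator_le_indicator_iff)
qed

lemma supp_subset_lessThan: "x \<in> pts k \<Longrightarrow> supp x \<subseteq> {..<k}"
  unfolding pts_def supp_def by (auto intro: ccontr)

lemma finite_supp: "x \<in> pts k \<Longrightarrow> finite (supp x)"
  using supp_subset_lessThan finite_subset by blast

lemma indicator_in_pts_iff: "(indicator S :: nat \<Rightarrow> nat) \<in> pts k \<longleftrightarrow> S \<subseteq> {..<k}"
  by (auto simp: pts_def indicator_eq_0_iff not_le)

lemma deg_eq_sum_supp: "x \<in> pts k \<Longrightarrow> deg k x = (\<Sum>i\<in>supp x. x i)"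
  unfolding deg_def
  by (rule sum.mono_neutral_right) (use supp_subset_lessThan[of x k] in \<open>auto simp: supp_def\<close>)

lemma deg_indicator: "S \<subseteq> {..<k} \<Longrightarrow> deg k (indicator S) = card S"
  by (simp add: deg_def sum_indicator_eq_card Int_absorb1)

lemma card_supp_le_deg: "x \<in> pts k \<Longrightarrow> card (supp x) \<le> deg k x"
  using sum_mono[of "supp x" "\<lambda>_. 1::nat" x] by (simp add: deg_eq_sum_supp supp_def)

lemma indicator_supp_if_card_supp_eq_deg:
  assumes x: "x \<in> pts k" and eq: "card (supp x) = deg k x"
  shows "x = indicator (supp x)"
proof
  fix i
  have "(\<Sum>i\<in>supp x. 1::nat) = (\<Sum>i\<in>supp x. x i)"
    using eq deg_eq_sum_supp[OF x] by simp
  then have "x i = 1" if "i \<in> supp x"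
    using sum_mono_inv[of "\<lambda>_. 1::nat" "supp x" x i] that finite_supp[OF x] by (simp add: supp_def)
  then show "x i = indicator (supp x) i"
    by (auto simp: supp_def indicator_def)
qed

lemma deg_less:
  assumes "x \<in> pts k" "y \<in> pts k" "x \<le> y" "x \<noteq> y"
  shows "deg k x < deg k y"
proof -
  obtain i where ne: "x i \<noteq> y i"
    using assms(4) by (meson ext)
  moreover have "x i \<le> y i"
    using assms(3) by (simp add: le_fun_def)
  ultimately have lt: "x i < y i"
    by simp
  have "i < k"
  proof (rule ccontr)
    assume "\<not> i < k"
    then have "x i = 0" "y i = 0"
      using assms(1,2) by (simp_all add: pts_def)
    then show False
      using ne by simp
  qed
  then show ?thesis
    unfolding deg_def using assms(3) lt
    by (intro sum_strict_mono_ex1) (auto simp: le_fun_def)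
qed

lemma deg_eq_1_imp_unit:
  assumes x: "x \<in> pts k" and deg: "deg k x = 1"
  shows "\<exists>a<k. x = indicator {a}"
proof -
  have "supp x \<noteq> {}"
    using deg deg_eq_sum_supp[OF x] by auto
  then have "card (supp x) \<noteq> 0"
    using finite_supp[OF x] by simp
  then have card: "card (supp x) = deg k x"
    using card_supp_le_deg[OF x] deg by linarith
  then obtain a where a: "supp x = {a}"
    using deg card_1_singletonE by metis
  have "x = indicator (supp x)"
    using indicator_supp_if_card_supp_eq_deg[OF x card] .
  then have "x = indicator {a}"
    using a by metis
  moreover have "a < k"
    using supp_subset_lessThan[OF x] a by auto
  ultimately show ?thesis
    by blast
qed

lemma deg_le_plength: "finite lam \<Longrightarrow> x \<in> lam \<Longrightarrow> deg k x \<le> plength k lam"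
  unfolding plength_def by simp

lemma ex_socle_ge: "finite lam \<Longrightarrow> x \<in> lam \<Longrightarrow> \<exists>s\<in>socle lam. x \<le> s"
  using finite_has_maximal2[of lam x] by (auto simp: socle_def)

lemma hilb_0:
  assumes "is_partition k lam" "lam \<noteq> {}"
  shows "hilb k lam 0 = 1"
proof -
  have sub: "lam \<subseteq> pts k" and down: "\<And>x y. x \<in> lam \<Longrightarrow> y \<in> pts k \<Longrightarrow> y \<le> x \<Longrightarrow> y \<in> lam"
    using assms(1) by (auto simp: is_partition_def)
  have "x = (\<lambda>_. 0)" if "x \<in> lam" "deg k x = 0" for x
  proof
    fix i
    show "x i = 0"
      using that sub by (cases "i < k") (auto simp: deg_def pts_def)
  qed
  moreover obtain y where "y \<in> lam"
    using assms(2) by blast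
  then have "(\<lambda>_. 0) \<in> lam"
    by (rule down) (simp_all add: pts_def le_fun_def)
  moreover have "deg k (\<lambda>_. 0) = 0"
    by (simp add: deg_def)
  ultimately have "{x\<in>lam. deg k x = 0} = {\<lambda>_. 0}"
    by blast
  then show ?thesis
    by (simp add: hilb_def)
qed

lemma card_eq_sum_hilb:
  assumes "finite lam"
  shows "card lam = (\<Sum>d\<le>plength k lam. hilb k lam d)"
proof -
  have "lam = (\<Union>d\<le>plength k lam. {x\<in>lam. deg k x = d})"
    using deg_le_plength[OF assms] by auto
  also have "card \<dots> = (\<Sum>d\<le>plength k lam. hilb k lam d)"
    unfolding hilb_def using assms by (intro card_UN_disjoint) auto
  finally show ?thesis .
qed

lemma socle_eq_top_degree:
  assumes part: "is_partition k lam" and socle: "\<forall>x\<in>socle lam. plength k lam \<le> deg k x"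
  shows "socle lam = {x\<in>lam. deg k x = plength k lam}"
proof (intro equalityI subsetI)
  have fin: "finite lam" and sub: "lam \<subseteq> pts k"
    using part by (auto simp: is_partition_def)
  fix x
  show "x \<in> {x\<in>lam. deg k x = plength k lam}" if x: "x \<in> socle lam"
  proof -
    have "x \<in> lam"
      using x by (simp add: socle_def)
    moreover have "plength k lam \<le> deg k x"
      using socle x by blast
    ultimately show ?thesis
      using deg_le_plength[OF fin] by (simp add: le_antisym)
  qed
  show "x \<in> socle lam" if x: "x \<in> {x\<in>lam. deg k x = plength k lam}"
  proof -
    have "y = x" if y: "y \<in> lam" "x \<le> y" for y
    proof (rule ccontr)
      assume "y \<noteq> x"
      then have "deg k x < deg k y"
        using x y sub by (intro deg_less) auto
      then show False
        using x deg_le_plength[OF fin y(1), of k] by simp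
    qed
    then show ?thesis
      using x by (simp add: socle_def)
  qed
qed

lemma unit_in_partition_if_hilb_1:
  assumes part: "is_partition k lam" and h1: "hilb k lam 1 = k" and "a < k"
  shows "indicator {a} \<in> lam"
proof -
  define units where "units = (\<lambda>a. indicator {a} :: nat \<Rightarrow> nat) ` {..<k}"
  have "{x\<in>lam. deg k x = 1} \<subseteq> units"
    using part deg_eq_1_imp_unit by (fastforce simp: units_def is_partition_def)
  moreover have "card units = k"
    unfolding units_def
    by (subst card_image) (auto intro: inj_onI dest: injD[OF inj_indicator])
  ultimately have "{x\<in>lam. deg k x = 1} = units"
    using h1 by (intro card_subset_eq) (auto simp: hilb_def units_def)
  then show ?thesis
    using assms(3) by (auto simp: units_def)
qed

definition block_partition :: "nat set set \<Rightarrow> (nat \<Rightarrow> nat) set" where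
  "block_partition P = indicator ` (\<Union>T\<in>P. Pow T)"

lemma is_partition_block_partition:
  assumes P: "partition_on {..<k} P"
  shows "is_partition k (block_partition P)"
  unfolding is_partition_def
proof (intro conjI ballI impI)
  have blocks: "T \<subseteq> {..<k}" if "T \<in> P" for T
    using P that by (auto simp: partition_on_def)
  then have "finite (\<Union>T\<in>P. Pow T)"
    using finite_elements[OF _ P] finite_subset[of _ "{..<k}"] by simp
  then show "finite (block_partition P)"
    by (simp add: block_partition_def)
  show "block_partition P \<subseteq> pts k"
    using blocks by (fastforce simp: block_partition_def indicator_in_pts_iff)
  fix x y assume "x \<in> block_partition P" "y \<le> x"
  then obtain S T where "T \<in> P" "S \<subseteq> T" "y \<le> indicator S"
    by (auto simp: block_partition_def)
  then have "y = indicator (supp y)" "supp y \<subseteq> T"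
    by (auto simp: le_indicator_iff)
  then show "y \<in> block_partition P"
    using \<open>T \<in> P\<close> by (auto simp: block_partition_def)
qed

lemma socle_block_partition:
  assumes P: "partition_on A P"
  shows "socle (block_partition P) = indicator ` P"
proof (intro equalityI subsetI)
  fix x :: "nat \<Rightarrow> nat"
  assume x: "x \<in> socle (block_partition P)"
  then obtain S T where ST: "x = indicator S" "S \<subseteq> T" "T \<in> P"
    by (auto simp: socle_def block_partition_def)
  then have "indicator T \<in> block_partition P" "x \<le> indicator T"
    by (auto simp: block_partition_def indicator_le_indicator_iff)
  then have "x = indicator T"
    using x by (auto simp: socle_def)
  then show "x \<in> indicator ` P"
    using ST(3) by blast
next
  fix x :: "nat \<Rightarrow> nat"
  assume "x \<in> indicator ` P"
  then obtain T where T: "x = indicator T" "T \<in> P"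
    by blast
  have "y = x" if y: "y \<in> block_partition P" "x \<le> y" for y
  proof -
    obtain S T' where "y = indicator S" "S \<subseteq> T'" "T' \<in> P"
      using y(1) by (auto simp: block_partition_def)
    moreover have "T \<subseteq> S"
      using y(2) T(1) \<open>y = indicator S\<close> by (simp add: indicator_le_indicator_iff)
    moreover have "T \<noteq> {}"
      using P T(2) by (auto simp: partition_on_def)
    ultimately have "T' = T"
      using partition_onD2[OF P] T(2) unfolding pairwise_def disjnt_def by blast
    then show "y = x"
      using T(1) \<open>y = indicator S\<close> \<open>S \<subseteq> T'\<close> \<open>T \<subseteq> S\<close> by simp
  qed
  moreover have "x \<in> block_partition P"
    using T by (auto simp: block_partition_def)
  ultimately show "x \<in> socle (block_partition P)"
    by (simp add: socle_def)
qed

lemma triple_partition_blocks: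
  assumes "P \<in> triple_partitions {..<k}" "T \<in> P"
  shows "T \<subseteq> {..<k}" "card T = 3" "finite T"
proof -
  show "T \<subseteq> {..<k}" "card T = 3"
    using assms by (auto simp: triple_partitions_def partition_on_def)
  then show "finite T"
    by (simp add: card_ge_0_finite)
qed

lemma block_partition_deg_eq:
  assumes P: "P \<in> triple_partitions {..<k}"
  shows "{x\<in>block_partition P. deg k x = d} = indicator ` (\<Union>T\<in>P. {S. S \<subseteq> T \<and> card S = d})"
proof (intro equalityI subsetI)
  fix x assume "x \<in> {x\<in>block_partition P. deg k x = d}"
  then obtain S T where "x = indicator S" "S \<subseteq> T" "T \<in> P" "deg k x = d"
    by (auto simp: block_partition_def)
  moreover have "deg k (indicator S) = card S"
    using triple_partition_blocks(1)[OF P] calculation by (meson deg_indicator order_trans)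
  ultimately have "S \<in> (\<Union>T\<in>P. {S. S \<subseteq> T \<and> card S = d})"
    by auto
  then show "x \<in> indicator ` (\<Union>T\<in>P. {S. S \<subseteq> T \<and> card S = d})"
    using \<open>x = indicator S\<close> by (rule rev_image_eqI)
next
  fix x :: "nat \<Rightarrow> nat"
  assume "x \<in> indicator ` (\<Union>T\<in>P. {S. S \<subseteq> T \<and> card S = d})"
  then obtain S where "x = indicator S" "S \<in> (\<Union>T\<in>P. {S. S \<subseteq> T \<and> card S = d})"
    by (rule imageE)
  moreover from this(2) obtain T where "S \<subseteq> T" "T \<in> P" "card S = d"
    by blast
  moreover have "deg k (indicator S) = card S"
    using triple_partition_blocks(1)[OF P] calculation by (meson deg_indicator order_trans)
  ultimately show "x \<in> {x\<in>block_partition P. deg k x = d}"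
    by (auto simp: block_partition_def)
qed

lemma hilb_block_partition:
  assumes P: "P \<in> triple_partitions {..<k}" and "0 < d"
  shows "hilb k (block_partition P) d = card P * (3 choose d)"
proof -
  note blocks = triple_partition_blocks[OF P]
  have part: "partition_on {..<k} P"
    using P by (simp add: triple_partitions_def)
  have "hilb k (block_partition P) d = card (\<Union>T\<in>P. {S. S \<subseteq> T \<and> card S = d})"
    unfolding hilb_def block_partition_deg_eq[OF P]
    by (simp add: card_image inj_on_subset[OF inj_indicator])
  also have "\<dots> = (\<Sum>T\<in>P. card {S. S \<subseteq> T \<and> card S = d})"
  proof (rule card_UN_disjoint)
    show "finite P"
      using finite_elements[OF _ part] by simp
    show "\<forall>T\<in>P. finite {S. S \<subseteq> T \<and> card S = d}"
      using blocks(3) by simp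
    show "\<forall>T\<in>P. \<forall>T'\<in>P. T \<noteq> T' \<longrightarrow> {S. S \<subseteq> T \<and> card S = d} \<inter> {S. S \<subseteq> T' \<and> card S = d} = {}"
    proof (intro ballI impI)
      fix T T' assume "T \<in> P" "T' \<in> P" "T \<noteq> T'"
      then have "T \<inter> T' = {}"
        using partition_onD2[OF part] by (simp add: pairwise_def disjnt_def)
      moreover have "S \<noteq> {}" if "card S = d" for S
        using \<open>0 < d\<close> that by auto
      ultimately show "{S. S \<subseteq> T \<and> card S = d} \<inter> {S. S \<subseteq> T' \<and> card S = d} = {}"
        by blast
    qed
  qed
  also have "\<dots> = card P * (3 choose d)"
    using blocks(2,3) by (simp add: n_subsets)
  finally show ?thesis .
qed

lemma plength_block_partition:
  assumes P: "P \<in> triple_partitions {..<k}" and "P \<noteq> {}"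
  shows "plength k (block_partition P) = 3"
  unfolding plength_def
proof (rule Max_eqI)
  note blocks = triple_partition_blocks[OF P]
  have "partition_on {..<k} P"
    using P by (simp add: triple_partitions_def)
  then show "finite (deg k ` block_partition P)"
    using is_partition_block_partition by (simp add: is_partition_def)
  show "d \<le> 3" if "d \<in> deg k ` block_partition P" for d
  proof -
    obtain S T where "d = deg k (indicator S)" "S \<subseteq> T" "T \<in> P"
      using \<open>d \<in> deg k ` block_partition P\<close> by (auto simp: block_partition_def)
    then show "d \<le> 3"
      using blocks card_mono[of T S] deg_indicator[of S k] by force
  qed
  obtain T where "T \<in> P"
    using assms(2) by blast
  then have "indicator T \<in> block_partition P"
    by (auto simp: block_partition_def)
  moreover have "deg k (indicator T) = 3"
    using blocks \<open>T \<in> P\<close> by (simp add: deg_indicator)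
  ultimately show "3 \<in> deg k ` block_partition P"
    by (metis image_eqI)
qed

lemma block_partition_M_partition:
  assumes P: "P \<in> triple_partitions {..<3 * n}" and "1 \<le> n"
  shows "hilb_tuple (3 * n) (block_partition P) = [1, 3 * n, 3 * n, n]
    \<and> M_partition (3 * n) (3 * n) n (block_partition P)
    \<and> plength (3 * n) (block_partition P) = 3"
proof -
  let ?lam = "block_partition P"
  note blocks = triple_partition_blocks[OF P]
  have part: "partition_on {..<3 * n} P"
    using P by (simp add: triple_partitions_def)
  have "card P = n"
    using card_triple_partition[OF P] by simp
  then have "P \<noteq> {}"
    using \<open>1 \<le> n\<close> by auto
  then have "?lam \<noteq> {}"
    by (auto simp: block_partition_def)
  have is_part: "is_partition (3 * n) ?lam"
    by (rule is_partition_block_partition[OF part])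
  have len: "plength (3 * n) ?lam = 3"
    by (rule plength_block_partition[OF P \<open>P \<noteq> {}\<close>])
  have h: "hilb (3 * n) ?lam 0 = 1" "hilb (3 * n) ?lam 1 = 3 * n"
    "hilb (3 * n) ?lam 2 = 3 * n" "hilb (3 * n) ?lam 3 = n"
    using hilb_0[OF is_part \<open>?lam \<noteq> {}\<close>] hilb_block_partition[OF P] \<open>card P = n\<close>
    by (simp_all add: choose_two)
  have "card ?lam = 1 + 3 * n + 3 * n + n"
    using card_eq_sum_hilb[of ?lam "3 * n"] is_part h len
    by (simp add: is_partition_def numeral_3_eq_3 eval_nat_numeral)
  moreover have "\<forall>x\<in>socle ?lam. 3 \<le> deg (3 * n) x"
    using socle_block_partition[OF part] blocks by (auto simp: deg_indicator)
  moreover have "{x\<in>?lam. 3 \<le> deg (3 * n) x} = {x\<in>?lam. deg (3 * n) x = 3}"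
    using deg_le_plength[of ?lam _ "3 * n"] is_part len by (force simp: is_partition_def)
  moreover have "hilb_tuple (3 * n) ?lam = [1, 3 * n, 3 * n, n]"
    using h len by (simp add: hilb_tuple_def eval_nat_numeral)
  ultimately show ?thesis
    using is_part h len by (simp add: M_partition_def hilb_def)
qed

lemma partition_eq_block_partition_socle:
  assumes part: "is_partition k lam" and squarefree: "\<forall>s\<in>socle lam. s = indicator (supp s)"
  shows "lam = block_partition (supp ` socle lam)"
proof (intro equalityI subsetI)
  have fin: "finite lam" and sub: "lam \<subseteq> pts k"
    and down: "\<And>x y. x \<in> lam \<Longrightarrow> y \<in> pts k \<Longrightarrow> y \<le> x \<Longrightarrow> y \<in> lam"
    using part by (auto simp: is_partition_def)
  fix x :: "nat \<Rightarrow> nat"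
  show "x \<in> block_partition (supp ` socle lam)" if "x \<in> lam"
  proof -
    obtain s where s: "s \<in> socle lam" "x \<le> s"
      using ex_socle_ge[OF fin \<open>x \<in> lam\<close>] by blast
    then have "x \<le> indicator (supp s)"
      using squarefree by simp
    then have "x = indicator (supp x)" "supp x \<in> Pow (supp s)"
      by (auto simp: le_indicator_iff)
    then show ?thesis
      using s(1) by (auto simp: block_partition_def)
  qed
  show "x \<in> lam" if x: "x \<in> block_partition (supp ` socle lam)"
  proof -
    obtain S s where S: "x = indicator S" "S \<subseteq> supp s" "s \<in> socle lam"
      using x by (auto simp: block_partition_def)
    have "s \<in> lam"
      using S(3) by (simp add: socle_def)
    moreover have "x \<le> s"
      using S squarefree by (metis indicator_le_indicator_iff)
    moreover have "x \<in> pts k"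
      using S(1,2) supp_subset_lessThan[of s k] sub \<open>s \<in> lam\<close>
      by (auto simp: indicator_in_pts_iff)
    ultimately show ?thesis
      using down by blast
  qed
qed

lemma supp_socle_cover:
  assumes part: "is_partition k lam" and h1: "hilb k lam 1 = k"
  shows "{..<k} \<subseteq> (\<Union>s\<in>socle lam. supp s)"
proof
  fix a assume "a \<in> {..<k}"
  then have "indicator {a} \<in> lam"
    by (intro unit_in_partition_if_hilb_1[OF part h1]) simp
  moreover have "finite lam"
    using part by (simp add: is_partition_def)
  ultimately obtain s where "s \<in> socle lam" "indicator {a} \<le> s"
    using ex_socle_ge by blast
  moreover from this(2) have "1 \<le> s a"
    by (auto simp: le_fun_def dest: spec[of _ a])
  then have "a \<in> supp s"
    by (simp add: supp_def)
  ultimately show "a \<in> (\<Union>s\<in>socle lam. supp s)"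
    by blast
qed

lemma supp_socle_triple_partition:
  assumes part: "is_partition (3 * n) lam" and h1: "hilb (3 * n) lam 1 = 3 * n"
    and type: "socle_type_3 (3 * n) lam n"
  shows "(\<forall>s\<in>socle lam. s = indicator (supp s)) \<and> supp ` socle lam \<in> triple_partitions {..<3 * n}"
proof -
  have fin: "finite lam" and sub: "lam \<subseteq> pts (3 * n)"
    using part by (auto simp: is_partition_def)
  have finS: "finite (socle lam)" and pts: "\<And>s. s \<in> socle lam \<Longrightarrow> s \<in> pts (3 * n)"
    using fin sub by (auto simp: socle_def)
  have deg3: "\<And>s. s \<in> socle lam \<Longrightarrow> deg (3 * n) s = 3" and "card (socle lam) = n"
    using type by (auto simp: socle_type_3_def)
  have le3: "\<And>s. s \<in> socle lam \<Longrightarrow> card (supp s) \<le> 3"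
    using card_supp_le_deg pts deg3 by metis
  have cover: "{..<3 * n} \<subseteq> (\<Union>s\<in>socle lam. supp s)"
    by (rule supp_socle_cover[OF part h1])
  have "3 * n \<le> card (\<Union>s\<in>socle lam. supp s)"
    using card_mono[OF _ cover] finS finite_supp[OF pts] by simp
  moreover have "card (\<Union>s\<in>socle lam. supp s) \<le> (\<Sum>s\<in>socle lam. card (supp s))"
    by (rule card_UN_le[OF finS])
  moreover have "(\<Sum>s\<in>socle lam. card (supp s)) \<le> (\<Sum>s\<in>socle lam. 3)"
    using le3 by (rule sum_mono)
  moreover have "(\<Sum>s\<in>socle lam. 3) = 3 * n"
    using \<open>card (socle lam) = n\<close> by simp
  ultimately have tight: "card (\<Union>s\<in>socle lam. supp s) = (\<Sum>s\<in>socle lam. card (supp s))"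
    "(\<Sum>s\<in>socle lam. card (supp s)) = (\<Sum>s\<in>socle lam. 3)"
    by linarith+
  have card3: "card (supp s) = 3" if "s \<in> socle lam" for s
    using sum_mono_inv[OF tight(2) le3 that finS] .
  have squarefree: "\<forall>s\<in>socle lam. s = indicator (supp s)"
    using indicator_supp_if_card_supp_eq_deg pts card3 deg3 by metis
  have "disjoint_family_on supp (socle lam)"
    using finS finite_supp[OF pts] tight(1) by (rule disjoint_family_on_if_card_UN_eq_sum)
  moreover have "\<Union>(supp ` socle lam) = {..<3 * n}"
    using cover supp_subset_lessThan[OF pts] by blast
  moreover have "{} \<notin> supp ` socle lam"
    using card3 by force
  ultimately have "partition_on {..<3 * n} (supp ` socle lam)"
    by (simp add: partition_on_def disjoint_family_on_disjoint_image)
  then show ?thesis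
    using squarefree card3 by (auto simp: triple_partitions_def)
qed

lemma socle_type_3_if_M_partition:
  assumes M: "M_partition k q m lam" and len: "plength k lam = 3"
  shows "socle_type_3 k lam m"
proof -
  have part: "is_partition k lam" and socle: "\<forall>x\<in>socle lam. 3 \<le> deg k x"
    and m: "card {x\<in>lam. 3 \<le> deg k x} = m"
    using M by (auto simp: M_partition_def)
  have top: "socle lam = {x\<in>lam. deg k x = 3}"
    using socle_eq_top_degree[OF part] socle len by simp
  also have "\<dots> = {x\<in>lam. 3 \<le> deg k x}"
    using deg_le_plength[of lam _ k] part len by (force simp: is_partition_def)
  finally have "card (socle lam) = m"
    using m by simp
  moreover have "\<forall>x\<in>socle lam. deg k x = 3"
    using top by simp
  ultimately show ?thesis
    by (simp add: socle_type_3_def)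
qed

lemma inj_on_block_partition: "inj_on block_partition {P. partition_on A P}"
proof (rule inj_on_inverseI)
  fix P assume "P \<in> {P. partition_on A P}"
  then show "supp ` socle (block_partition P) = P"
    by (simp add: socle_block_partition image_image)
qed

lemma socle_type_3_partition_eq_block_partition:
  assumes "is_partition (3 * n) lam" "hilb (3 * n) lam 1 = 3 * n" "socle_type_3 (3 * n) lam n"
  shows "\<exists>P\<in>triple_partitions {..<3 * n}. lam = block_partition P"
  using supp_socle_triple_partition[OF assms] partition_eq_block_partition_socle[OF assms(1)] by blast

lemma M_partitions_of_length_3:
  assumes "1 \<le> n"
  shows "{lam. M_partition (3 * n) (3 * n) n lam \<and> plength (3 * n) lam = 3}
    = block_partition ` triple_partitions {..<3 * n}"
proof (intro equalityI subsetI)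
  fix lam assume "lam \<in> {lam. M_partition (3 * n) (3 * n) n lam \<and> plength (3 * n) lam = 3}"
  then have "M_partition (3 * n) (3 * n) n lam" "plength (3 * n) lam = 3"
    by simp_all
  then have "is_partition (3 * n) lam" "hilb (3 * n) lam 1 = 3 * n" "socle_type_3 (3 * n) lam n"
    using socle_type_3_if_M_partition by (auto simp only: M_partition_def)
  then show "lam \<in> block_partition ` triple_partitions {..<3 * n}"
    using socle_type_3_partition_eq_block_partition by blast
next
  fix lam assume "lam \<in> block_partition ` triple_partitions {..<3 * n}"
  then show "lam \<in> {lam. M_partition (3 * n) (3 * n) n lam \<and> plength (3 * n) lam = 3}"
    using block_partition_M_partition[OF _ assms] by blast
qed

theorem proposition5p1:
  fixes n :: nat
  assumes "n \<ge> 1"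
  shows "(\<forall>lam. is_partition (3*n) lam \<and> hilb (3*n) lam 1 = 3*n \<and> socle_type_3 (3*n) lam n
            \<longrightarrow> hilb_tuple (3*n) lam = [1, 3*n, 3*n, n] \<and>
                M_partition (3*n) (3*n) n lam \<and> plength (3*n) lam = 3)
         \<and> real (alpha (3*n) (3*n) n 3) = fact (3*n) / (6^n * fact n)"
proof
  show "\<forall>lam. is_partition (3*n) lam \<and> hilb (3*n) lam 1 = 3*n \<and> socle_type_3 (3*n) lam n
            \<longrightarrow> hilb_tuple (3*n) lam = [1, 3*n, 3*n, n] \<and>
                M_partition (3*n) (3*n) n lam \<and> plength (3*n) lam = 3"
    using socle_type_3_partition_eq_block_partition block_partition_M_partition[OF _ assms] by blast
next
  have "alpha (3*n) (3*n) n 3 = card (triple_partitions {..<3*n})"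
    unfolding alpha_def M_partitions_of_length_3[OF assms]
    by (rule card_image, rule inj_on_subset[OF inj_on_block_partition]) (auto simp: triple_partitions_def)
  moreover have "card (triple_partitions {..<3*n}) * 6 ^ n * fact n = fact (3*n)"
    by (rule card_triple_partitions) simp_all
  ultimately have "real (alpha (3*n) (3*n) n 3) * 6 ^ n * fact n = fact (3*n)"
    by (metis of_nat_fact of_nat_mult of_nat_numeral of_nat_power)
  then show "real (alpha (3*n) (3*n) n 3) = fact (3*n) / (6^n * fact n)"
    by (simp add: field_simps)
qed

end
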